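(* Let $\mathcal{H}$ be a finite class of classifiers $h:\mathcal{X}\times\{-1,1\}\to\{0,1\}$ containing the two classifiers $\mathbf{1}[a=1]$ and $\mathbf{1}[a=-1]$. Let $(\hat\pi,\hat\lambda)$ be a $\nu$-approximate saddle point of the Lagrangian $\mathcal{L}$ over $\Delta(\mathcal{H})\times\Lambda$. Then $$err(\hat\pi,\mathcal{P})\le\mathrm{OPT}+2\nu\quad\text{and}\quad\forall j\in\{\pm1\}:\ \mathrm{FPR}_j(\hat\pi)-\mathrm{FPR}_{-j}(\hat\pi)\le\gamma+2\nu.$$
   Context: Given points $X_1,\dots,X_n$ (each $X_j=(\hat x_j,a_j)$), labels $Y_j\in\{0,1\}$ and nonnegative weights $w_j$ with $\sum_j w_j=1$, let $err(h,\mathcal{P})=\sum_{j=1}^n w_j\mathbf{1}\{h(X_j)\neq Y_j\}$ and $err(\pi,\mathcal{P})=\mathbb{E}_{h\sim\pi}[err(h,\mathcal{P})]$ for $\pi\in\Delta(\mathcal{H})$. Let $\mathcal{D}_E$ be a fixed empirical distribution of labeled examples $(\hat x,a,y)$ containing negative examples of both groups, and for $j\in\{\pm1\}$ let $\mathrm{FPR}_j(\pi)=\mathbb{E}_{h\sim\pi}[\Pr_{\mathcal{D}_E}(h(x)=1\mid a=j,y\text{ negative})]$. Fix $\gamma\ge0$. $\mathrm{OPT}=\min\{err(\pi,\mathcal{P}):\pi\in\Delta(\mathcal{H}),\ \mathrm{FPR}_j(\pi)-\mathrm{FPR}_{-j}(\pi)\le\gamma\ \forall j\in\{\pm1\}\}$.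 The Lagrangian is $\mathcal{L}(\pi,\lambda)=err(\pi,\mathcal{P})+\sum_{j\in\{\pm1\}}\lambda_j(\mathrm{FPR}_j(\pi)-\mathrm{FPR}_{-j}(\pi)-\gamma)$ for $\lambda\in\mathbb{R}^2_+$, and $\Lambda=\{\lambda\in\mathbb{R}^2_+:\|\lambda\|_1\le2\}$. $(\hat\pi,\hat\lambda)\in\Delta(\mathcal{H})\times\Lambda$ is a $\nu$-approximate saddle point if $\mathcal{L}(\hat\pi,\hat\lambda)\le\mathcal{L}(g,\hat\lambda)+\nu$ for all $g\in\Delta(\mathcal{H})$ and $\mathcal{L}(\hat\pi,\hat\lambda)\ge\mathcal{L}(\hat\pi,\lambda)-\nu$ for all $\lambda\in\Lambda$. *)

theory Defs
  imports Main "HOL-Analysis.Analysis"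
begin

text \<open>Classifiers map a point (xhat, a) with group a in {-1,1} to {0,1}, encoded as bool
  (True = label 1). Labels Y are bool as well (True = 1, False = negative).\<close>

type_synonym 'x clf = "'x \<times> int \<Rightarrow> bool"

definition DeltaH :: "'x clf set \<Rightarrow> ('x clf \<Rightarrow> real) set" where
  "DeltaH H = {p. (\<forall>h\<in>H. 0 \<le> p h) \<and> (\<forall>h. h \<notin> H \<longrightarrow> p h = 0) \<and> sum p H = 1}"

definition err_h :: "nat \<Rightarrow> (nat \<Rightarrow> 'x \<times> int) \<Rightarrow> (nat \<Rightarrow> bool) \<Rightarrow> (nat \<Rightarrow> real) \<Rightarrow> 'x clf \<Rightarrow> real" where
  "err_h n Xs Y w h = (\<Sum>j<n. w j * (if h (Xs j) \<noteq> Y j then 1 else 0))"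

definition err_pi :: "'x clf set \<Rightarrow> nat \<Rightarrow> (nat \<Rightarrow> 'x \<times> int) \<Rightarrow> (nat \<Rightarrow> bool) \<Rightarrow> (nat \<Rightarrow> real)
    \<Rightarrow> ('x clf \<Rightarrow> real) \<Rightarrow> real" where
  "err_pi H n Xs Y w p = (\<Sum>h\<in>H. p h * err_h n Xs Y w h)"

text \<open>The empirical distribution D_E is the uniform distribution over a finite sample E (list,
  repetitions allowed) of labeled examples (xhat, a, y); y = False means negative.\<close>
definition fpr_h :: "('x \<times> int \<times> bool) list \<Rightarrow> int \<Rightarrow> 'x clf \<Rightarrow> real" where
  "fpr_h E j h = real (length (filter (\<lambda>(x,a,y). a = j \<and> \<not> y \<and> h (x,a)) E))
                / real (length (filter (\<lambda>(x,a,y). a = j \<and> \<not> y) E))"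

definition FPR :: "'x clf set \<Rightarrow> ('x \<times> int \<times> bool) list \<Rightarrow> int \<Rightarrow> ('x clf \<Rightarrow> real) \<Rightarrow> real" where
  "FPR H E j p = (\<Sum>h\<in>H. p h * fpr_h E j h)"

text \<open>Multipliers lambda in R^2_+ are pairs (lambda_1, lambda_{-1}).\<close>
definition Lagr :: "'x clf set \<Rightarrow> nat \<Rightarrow> (nat \<Rightarrow> 'x \<times> int) \<Rightarrow> (nat \<Rightarrow> bool) \<Rightarrow> (nat \<Rightarrow> real)
    \<Rightarrow> ('x \<times> int \<times> bool) list \<Rightarrow> real \<Rightarrow> ('x clf \<Rightarrow> real) \<Rightarrow> real \<times> real \<Rightarrow> real" where
  "Lagr H n Xs Y w E \<gamma> p l = err_pi H n Xs Y w p
     + fst l * (FPR H E 1 p - FPR H E (-1) p - \<gamma>)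
     + snd l * (FPR H E (-1) p - FPR H E 1 p - \<gamma>)"

definition Lambda_set :: "(real \<times> real) set" where
  "Lambda_set = {l. 0 \<le> fst l \<and> 0 \<le> snd l \<and> fst l + snd l \<le> 2}"

definition OPT :: "'x clf set \<Rightarrow> nat \<Rightarrow> (nat \<Rightarrow> 'x \<times> int) \<Rightarrow> (nat \<Rightarrow> bool) \<Rightarrow> (nat \<Rightarrow> real)
    \<Rightarrow> ('x \<times> int \<times> bool) list \<Rightarrow> real \<Rightarrow> real" where
  "OPT H n Xs Y w E \<gamma> = Inf {err_pi H n Xs Y w p | p. p \<in> DeltaH H
      \<and> FPR H E 1 p - FPR H E (-1) p \<le> \<gamma> \<and> FPR H E (-1) p - FPR H E 1 p \<le> \<gamma>}"

definition approx_saddle :: "'x clf set \<Rightarrow> nat \<Rightarrow> (nat \<Rightarrow> 'x \<times> int) \<Rightarrow> (nat \<Rightarrow> bool) \<Rightarrow> (nat \<Rightarrow> real)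
    \<Rightarrow> ('x \<times> int \<times> bool) list \<Rightarrow> real \<Rightarrow> real \<Rightarrow> ('x clf \<Rightarrow> real) \<Rightarrow> real \<times> real \<Rightarrow> bool" where
  "approx_saddle H n Xs Y w E \<gamma> \<nu> p l \<longleftrightarrow> p \<in> DeltaH H \<and> l \<in> Lambda_set
     \<and> (\<forall>g\<in>DeltaH H. Lagr H n Xs Y w E \<gamma> p l \<le> Lagr H n Xs Y w E \<gamma> g l + \<nu>)
     \<and> (\<forall>l'\<in>Lambda_set. Lagr H n Xs Y w E \<gamma> p l \<ge> Lagr H n Xs Y w E \<gamma> p l' - \<nu>)"

end

theory Submission
  imports Defs
begin

text \<open>
  Error: against the multiplier \<open>0\<close> the Lagrangian of the saddle point \<open>p\<close> is at least
  \<open>err p - \<nu>\<close>, and by the min-player condition it is at most \<open>err g + \<nu>\<close> for every feasible \<open>g\<close>;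
  a feasible \<open>g\<close> exists, the even mixture of the two group indicators.
  Constraint \<open>j\<close>: let \<open>D\<close> be the rate difference, \<open>t = D - \<gamma>\<close> the violation and
  \<open>m = \<lambda>\<^sub>j - \<lambda>\<^sub>-\<^sub>j\<close>. Deviating to the multiplier with all its mass \<open>2\<close> on \<open>\<lambda>\<^sub>j\<close> gives
  \<open>(2 - m) t \<le> \<nu>\<close>; deviating to the classifier \<open>[a = -j]\<close>, whose false positive rates are
  \<open>0\<close> and \<open>1\<close>, gives \<open>m (D + 1) \<le> 1 + \<nu>\<close>. Multiplying the two and using \<open>D \<ge> t\<close> rules out
  \<open>t > 2\<nu>\<close>.
\<close>

lemma lagrangian_gap_bound:
  fixes A D e a b \<gamma> \<nu> :: real
  assumes "0 \<le> b" "0 \<le> \<gamma>" "0 \<le> \<nu>" "0 \<le> A" "e \<le> 1"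
    and best_multiplier: "A + 2 * (D - \<gamma>) - \<nu> \<le> A + a * (D - \<gamma>) + b * (- D - \<gamma>)"
    and best_response: "A + a * (D - \<gamma>) + b * (- D - \<gamma>) \<le> e + a * (- 1 - \<gamma>) + b * (1 - \<gamma>) + \<nu>"
  shows "D - \<gamma> \<le> 2 * \<nu>"
proof (rule ccontr)
  define m t where "m = a - b" and "t = D - \<gamma>"
  assume "\<not> D - \<gamma> \<le> 2 * \<nu>"
  then have t: "2 * \<nu> < t" "t \<le> D" using assms(2) by (auto simp: t_def)
  have "(2 - m) * t \<le> \<nu> - 2 * b * \<gamma>"
    using best_multiplier by (simp add: m_def t_def algebra_simps)
  then have gap: "(2 - m) * t \<le> \<nu>"
    using assms(1,2) by (smt (verit) mult_nonneg_nonneg)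
  have "m * (D + 1) \<le> e - A + \<nu>"
    using best_response by (simp add: m_def algebra_simps)
  then have resp: "m * (D + 1) \<le> 1 + \<nu>"
    using assms(4,5) by linarith
  have "t * (2 * D + 1 - \<nu>) \<le> t * ((2 - m) * (D + 1))"
    using resp t assms(3) by (intro mult_left_mono) (auto simp: algebra_simps)
  also have "\<dots> = ((2 - m) * t) * (D + 1)"
    by (simp add: algebra_simps)
  also have "\<dots> \<le> \<nu> * (D + 1)"
    using gap t assms(3) by (intro mult_right_mono) auto
  also have "\<dots> \<le> 2 * \<nu> * (2 * D + 1 - \<nu>)"
  proof -
    have "0 \<le> \<nu> * (3 * D + 1 - 2 * \<nu>)"
      using t assms(3) by (intro mult_nonneg_nonneg) auto
    then show ?thesis by (simp add: algebra_simps)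
  qed
  finally have "t \<le> 2 * \<nu>"
    using t assms(3) by (simp add: mult_le_cancel_right)
  with t show False by linarith
qed

lemma err_h_le_1:
  assumes "\<forall>j<n. 0 \<le> w j" "(\<Sum>j<n. w j) = 1"
  shows "err_h n Xs Y w h \<le> 1"
proof -
  have "err_h n Xs Y w h \<le> (\<Sum>j<n. w j)"
    unfolding err_h_def using assms(1) by (intro sum_mono) auto
  with assms(2) show ?thesis by simp
qed

lemma err_pi_nonneg:
  assumes "p \<in> DeltaH H" "\<forall>j<n. 0 \<le> w j"
  shows "0 \<le> err_pi H n Xs Y w p"
  using assms unfolding err_pi_def err_h_def DeltaH_def
  by (intro sum_nonneg mult_nonneg_nonneg) auto

lemma fpr_h_own_group:
  assumes "(x, j, False) \<in> set E"
  shows "fpr_h E j (\<lambda>(x, a). a = j) = 1"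
proof -
  have "filter (\<lambda>(x, a, y). a = j \<and> \<not> y \<and> (\<lambda>(x, a). a = j) (x, a)) E
      = filter (\<lambda>(x, a, y). a = j \<and> \<not> y) E"
    by (rule filter_cong) auto
  moreover have "filter (\<lambda>(x, a, y). a = j \<and> \<not> y) E \<noteq> []"
    using assms by (auto simp: filter_empty_conv)
  ultimately show ?thesis unfolding fpr_h_def by simp
qed

lemma fpr_h_other_group:
  assumes "k \<noteq> j"
  shows "fpr_h E k (\<lambda>(x, a). a = j) = 0"
  using assms unfolding fpr_h_def by (simp add: filter_empty_conv split_beta)

definition point_mass :: "'x clf \<Rightarrow> 'x clf \<Rightarrow> real" where
  "point_mass h = (\<lambda>g. if g = h then 1 else 0)"

lemma sum_point_mass:
  assumes "finite H" "h \<in> H"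
  shows "(\<Sum>g\<in>H. point_mass h g * f g) = f h"
proof -
  have "(\<Sum>g\<in>H. point_mass h g * f g) = (\<Sum>g\<in>H. if g = h then f g else 0)"
    unfolding point_mass_def by (rule sum.cong) auto
  with assms show ?thesis by simp
qed

lemma point_mass_in_DeltaH: "finite H \<Longrightarrow> h \<in> H \<Longrightarrow> point_mass h \<in> DeltaH H"
  unfolding DeltaH_def point_mass_def by auto

lemma err_pi_point_mass:
  "finite H \<Longrightarrow> h \<in> H \<Longrightarrow> err_pi H n Xs Y w (point_mass h) = err_h n Xs Y w h"
  unfolding err_pi_def by (rule sum_point_mass)

lemma FPR_point_mass: "finite H \<Longrightarrow> h \<in> H \<Longrightarrow> FPR H E j (point_mass h) = fpr_h E j h"
  unfolding FPR_def by (rule sum_point_mass)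

lemma DeltaH_convex:
  assumes "p \<in> DeltaH H" "q \<in> DeltaH H" "0 \<le> t" "t \<le> 1"
  shows "(\<lambda>h. t * p h + (1 - t) * q h) \<in> DeltaH H"
  using assms unfolding DeltaH_def by (auto simp: sum.distrib sum_distrib_left[symmetric])

lemma FPR_convex:
  "FPR H E j (\<lambda>h. t * p h + (1 - t) * q h) = t * FPR H E j p + (1 - t) * FPR H E j q"
  unfolding FPR_def by (simp add: distrib_right mult.assoc sum.distrib sum_distrib_left)

lemma exists_FPR_balanced:
  assumes "finite H" "(\<lambda>(x, a). a = 1) \<in> H" "(\<lambda>(x, a). a = -1) \<in> H"
    and "(x, 1, False) \<in> set E" "(x', -1, False) \<in> set E"
  shows "\<exists>g\<in>DeltaH H. FPR H E 1 g = FPR H E (-1) g"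
proof
  let ?g = "\<lambda>h. 1/2 * point_mass (\<lambda>(x, a). a = 1) h + (1 - 1/2) * point_mass (\<lambda>(x, a). a = -1) h"
  show "?g \<in> DeltaH H"
    using assms by (intro DeltaH_convex point_mass_in_DeltaH) auto
  show "FPR H E 1 ?g = FPR H E (-1) ?g"
    unfolding FPR_convex using assms by (simp add: FPR_point_mass fpr_h_own_group fpr_h_other_group)
qed

lemma approx_saddle_nu_nonneg: "approx_saddle H n Xs Y w E \<gamma> \<nu> p l \<Longrightarrow> 0 \<le> \<nu>"
  unfolding approx_saddle_def by fastforce

lemma approx_saddle_err_le_OPT:
  assumes saddle: "approx_saddle H n Xs Y w E \<gamma> \<nu> p l"
    and feasible: "\<exists>g\<in>DeltaH H. FPR H E 1 g - FPR H E (-1) g \<le> \<gamma> \<and> FPR H E (-1) g - FPR H E 1 g \<le> \<gamma>"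
  shows "err_pi H n Xs Y w p \<le> OPT H n Xs Y w E \<gamma> + 2 * \<nu>"
proof -
  let ?L = "Lagr H n Xs Y w E \<gamma>"
  have l: "0 \<le> fst l" "0 \<le> snd l" and "(0, 0) \<in> Lambda_set"
    using saddle unfolding approx_saddle_def Lambda_set_def by auto
  then have lower: "err_pi H n Xs Y w p - \<nu> \<le> ?L p l"
    using saddle unfolding approx_saddle_def by (force simp: Lagr_def)
  have "err_pi H n Xs Y w p - 2 * \<nu> \<le> err_pi H n Xs Y w g"
    if "g \<in> DeltaH H" "FPR H E 1 g - FPR H E (-1) g \<le> \<gamma>" "FPR H E (-1) g - FPR H E 1 g \<le> \<gamma>" for g
  proof -
    have "?L g l \<le> err_pi H n Xs Y w g"
      using that(2,3) l unfolding Lagr_def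
      by (smt (verit) mult_nonneg_nonpos)
    moreover have "?L p l \<le> ?L g l + \<nu>"
      using saddle that(1) unfolding approx_saddle_def by blast
    ultimately show ?thesis using lower by linarith
  qed
  then have "err_pi H n Xs Y w p - 2 * \<nu> \<le> OPT H n Xs Y w E \<gamma>"
    using feasible unfolding OPT_def by (intro cInf_greatest) auto
  then show ?thesis by simp
qed

text \<open>The paper's \<open>\<lambda>\<^sub>j\<close> for the group \<open>j \<in> {1, -1}\<close>, in which the Lagrangian is symmetric.\<close>

definition multiplier :: "int \<Rightarrow> real \<times> real \<Rightarrow> real" where
  "multiplier j l = (if j = 1 then fst l else snd l)"

lemma Lagr_by_group:
  assumes "j \<in> {1, -1}"
  shows "Lagr H n Xs Y w E \<gamma> p l = err_pi H n Xs Y w p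
    + multiplier j l * (FPR H E j p - FPR H E (-j) p - \<gamma>)
    + multiplier (-j) l * (- (FPR H E j p - FPR H E (-j) p) - \<gamma>)"
  using assms unfolding Lagr_def multiplier_def by (auto simp: algebra_simps)

lemma approx_saddle_FPR_gap_le:
  assumes saddle: "approx_saddle H n Xs Y w E \<gamma> \<nu> p l"
    and "finite H" and j: "j \<in> {1, -1}" and "h \<in> H" "fpr_h E j h = 0" "fpr_h E (-j) h = 1"
    and "\<forall>i<n. 0 \<le> w i" "(\<Sum>i<n. w i) = 1" "0 \<le> \<gamma>"
  shows "FPR H E j p - FPR H E (-j) p \<le> \<gamma> + 2 * \<nu>"
proof -
  let ?L = "Lagr H n Xs Y w E \<gamma>"
  define D where "D = FPR H E j p - FPR H E (-j) p"
  have p: "p \<in> DeltaH H" and "0 \<le> multiplier (-j) l"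
    using saddle j unfolding approx_saddle_def Lambda_set_def multiplier_def by auto
  obtain l' where "l' \<in> Lambda_set" "multiplier j l' = 2" "multiplier (-j) l' = 0"
    using j that[of "(2, 0)"] that[of "(0, 2)"] by (auto simp: Lambda_set_def multiplier_def)
  then have "err_pi H n Xs Y w p + 2 * (D - \<gamma>) - \<nu> \<le> ?L p l"
    using saddle j unfolding approx_saddle_def by (force simp: Lagr_by_group[of j] D_def)
  moreover have "?L p l \<le> ?L (point_mass h) l + \<nu>"
    using saddle assms(2,4) point_mass_in_DeltaH unfolding approx_saddle_def by blast
  ultimately have "D - \<gamma> \<le> 2 * \<nu>"
    using assms(2-) \<open>0 \<le> multiplier (-j) l\<close> approx_saddle_nu_nonneg[OF saddle]
      err_pi_nonneg[OF p] err_h_le_1[of n w Xs Y h]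
    by (intro lagrangian_gap_bound[where A = "err_pi H n Xs Y w p" and e = "err_h n Xs Y w h"
          and a = "multiplier j l"])
      (simp_all add: Lagr_by_group[of j] D_def FPR_point_mass err_pi_point_mass)
  then show ?thesis by (simp add: D_def)
qed

theorem lemma10:
  fixes H :: "'x clf set" and n :: nat and Xs :: "nat \<Rightarrow> 'x \<times> int" and Y :: "nat \<Rightarrow> bool"
    and w :: "nat \<Rightarrow> real" and E :: "('x \<times> int \<times> bool) list"
    and \<gamma> \<nu> :: real and p :: "'x clf \<Rightarrow> real" and l :: "real \<times> real"
  assumes finH: "finite H"
    and H1: "(\<lambda>(x, a). a = 1) \<in> H" and H2: "(\<lambda>(x, a). a = -1) \<in> H"
    and groups: "\<forall>j<n. snd (Xs j) \<in> {-1, 1}"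
    and wnn: "\<forall>j<n. 0 \<le> w j" and wsum: "(\<Sum>j<n. w j) = 1"
    and Egroups: "\<forall>(x, a, y) \<in> set E. a \<in> {-1, 1}"
    and Eneg1: "\<exists>x. (x, 1, False) \<in> set E" and Eneg2: "\<exists>x. (x, -1, False) \<in> set E"
    and gam: "0 \<le> \<gamma>"
    and saddle: "approx_saddle H n Xs Y w E \<gamma> \<nu> p l"
  shows "err_pi H n Xs Y w p \<le> OPT H n Xs Y w E \<gamma> + 2 * \<nu>
    \<and> FPR H E 1 p - FPR H E (-1) p \<le> \<gamma> + 2 * \<nu>
    \<and> FPR H E (-1) p - FPR H E 1 p \<le> \<gamma> + 2 * \<nu>"
proof -
  obtain x1 x2 where x1: "(x1, 1, False) \<in> set E" and x2: "(x2, -1, False) \<in> set E"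
    using Eneg1 Eneg2 by blast
  obtain g where "g \<in> DeltaH H" "FPR H E 1 g = FPR H E (-1) g"
    using exists_FPR_balanced[OF finH H1 H2 x1 x2] by blast
  then have err: "err_pi H n Xs Y w p \<le> OPT H n Xs Y w E \<gamma> + 2 * \<nu>"
    using gam by (intro approx_saddle_err_le_OPT[OF saddle] bexI[of _ g]) auto
  have "FPR H E 1 p - FPR H E (-1) p \<le> \<gamma> + 2 * \<nu>"
    using approx_saddle_FPR_gap_le[OF saddle finH _ H2, of 1] x2 wnn wsum gam
    by (simp add: fpr_h_own_group fpr_h_other_group)
  moreover have "FPR H E (-1) p - FPR H E 1 p \<le> \<gamma> + 2 * \<nu>"
    using approx_saddle_FPR_gap_le[OF saddle finH _ H1, of "-1"] x1 wnn wsum gam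
    by (simp add: fpr_h_own_group fpr_h_other_group)
  ultimately show ?thesis using err by blast
qed

end
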